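(* Assume all struts are straight, and let $n\ge1$, $k\ge0$ be integers with $k\ge n-1$. If $\psi\in M_n$ satisfies $b(\Sigma,\psi)=0$ for all $\Sigma\in V_k$, then $\psi=0$; i.e. $\operatorname{Ker}B_h^T=\{0\}$.
   Context: Network: a stent is modelled by a finite connected graph with vertices $j=1,\dots,n_{\mathcal V}$ and oriented edges $i=1,\dots,n_{\mathcal E}$. $J_j^-$ ($J_j^+$) is the set of edges leaving (entering) vertex $j$. Edge $i$ is a straight segment of length $\ell^i>0$, parametrized as $\Phi^i(s)=\Phi^i(0)+s\,t^i$, $s\in[0,\ell^i]$, with constant unit tangent $t^i$; $s=0$ at the vertex it leaves, $s=\ell^i$ at the vertex it enters. Matrices: $A^+_{I}\in\mathbb{R}^{3n_{\mathcal V}\times 3n_{\mathcal E}}$ has $3\times3$ block $I_3$ in block row $j$, block column $i$ if $i\in J_j^+$ and $0$ otherwise; $A^-_I$ likewise with $J_j^-$. Notation: $P_m(\mathcal N)$ denotes functions that on each edge $[0,\ell^i]$ are real polynomials of degree at most $m$ (no continuity at vertices); $\int_{\mathcal N}v=\sum_i\int_0^{\ell^i}v^i\,ds$. $V_k=P_k(\mathcal N)^3\times P_k(\mathcal N)^3\times(\mathbb{R}^{3n_{\mathcal E}})^4\times\mathbb{R}^3\times\mathbb{R}^3$ with elements $\Sigma=(q,p,P_+,P_-,Q_+,Q_-,\alpha,\beta)$, $M_n=P_n(\mathcal N)^3\times P_n(\mathcal N)^3\times\mathbb{R}^{3n_{\mathcal V}}\times\mathbb{R}^{3n_{\mathcal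 V}}$ with elements $\psi=(v,w,V,W)$. $b(\Sigma,\psi)=\sum_i\int_0^{\ell^i}\big(-p^i\cdot(\partial_sv^i+t^i\times w^i)-q^i\cdot\partial_sw^i\big)ds+\sum_i\big(P^i_+\cdot v^i(\ell^i)-P^i_-\cdot v^i(0)\big)+\sum_i\big(Q^i_+\cdot w^i(\ell^i)-Q^i_-\cdot w^i(0)\big)-(A^+_IP_+-A^-_IP_-)\cdot V-(A^+_IQ_+-A^-_IQ_-)\cdot W+\alpha\cdot\int_{\mathcal N}v+\beta\cdot\int_{\mathcal N}w$. *)

theory Defs
  imports "HOL-Analysis.Analysis" "HOL-Analysis.Cross3" "HOL-Computational_Algebra.Polynomial"
begin

(* Vertices are 1..nV, edges are 1..nE.
   Edge i leaves vertex src i and enters vertex tgt i, has length len i and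
   constant unit tangent tang i; pos j is the position of vertex j. *)
record network =
  nV :: nat
  nE :: nat
  src :: "nat \<Rightarrow> nat"
  tgt :: "nat \<Rightarrow> nat"
  len :: "nat \<Rightarrow> real"
  tang :: "nat \<Rightarrow> real^3"
  pos :: "nat \<Rightarrow> real^3"

definition edges :: "network \<Rightarrow> nat set" where "edges N = {1..nE N}"
definition verts :: "network \<Rightarrow> nat set" where "verts N = {1..nV N}"

definition adj :: "network \<Rightarrow> (nat \<times> nat) set" where
  "adj N = {(src N i, tgt N i) | i. i \<in> edges N} \<union> {(tgt N i, src N i) | i. i \<in> edges N}"

definition connected_network :: "network \<Rightarrow> bool" where
  "connected_network N \<longleftrightarrow> (\<forall>a\<in>verts N. \<forall>b\<in>verts N. (a, b) \<in> (adj N)\<^sup>*)"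

definition straight_network :: "network \<Rightarrow> bool" where
  "straight_network N \<longleftrightarrow>
     nV N \<ge> 1 \<and> nE N \<ge> 1 \<and> connected_network N \<and>
     (\<forall>i\<in>edges N. src N i \<in> verts N \<and> tgt N i \<in> verts N \<and> len N i > 0 \<and>
        norm (tang N i) = 1 \<and> pos N (tgt N i) = pos N (src N i) + len N i *\<^sub>R tang N i)"

(* edgewise R^3-valued polynomial functions, represented componentwise:
   v i j is the j-th component polynomial on edge i *)
type_synonym pfun = "nat \<Rightarrow> 3 \<Rightarrow> real poly"

definition ev :: "(3 \<Rightarrow> real poly) \<Rightarrow> real \<Rightarrow> real^3" where
  "ev p s = (\<chi> j. poly (p j) s)"

definition dv :: "(3 \<Rightarrow> real poly) \<Rightarrow> 3 \<Rightarrow> real poly" where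
  "dv p = (\<lambda>j. pderiv (p j))"

definition inP :: "network \<Rightarrow> nat \<Rightarrow> pfun \<Rightarrow> bool" where
  "inP N m v \<longleftrightarrow> (\<forall>i\<in>edges N. \<forall>j. degree (v i j) \<le> m)"

definition netint :: "network \<Rightarrow> pfun \<Rightarrow> real^3" where
  "netint N v = (\<Sum>i\<in>edges N. integral {0..len N i} (ev (v i)))"

definition Aplus :: "network \<Rightarrow> (nat \<Rightarrow> real^3) \<Rightarrow> nat \<Rightarrow> real^3" where
  "Aplus N P j = (\<Sum>i\<in>{i\<in>edges N. tgt N i = j}. P i)"
definition Aminus :: "network \<Rightarrow> (nat \<Rightarrow> real^3) \<Rightarrow> nat \<Rightarrow> real^3" where
  "Aminus N P j = (\<Sum>i\<in>{i\<in>edges N. src N i = j}. P i)"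

(* the bilinear form b(Sigma, psi), Sigma = (q,p,P+,P-,Q+,Q-,alpha,beta), psi = (v,w,V,W) *)
definition bform :: "network \<Rightarrow> pfun \<Rightarrow> pfun \<Rightarrow> (nat \<Rightarrow> real^3) \<Rightarrow> (nat \<Rightarrow> real^3)
    \<Rightarrow> (nat \<Rightarrow> real^3) \<Rightarrow> (nat \<Rightarrow> real^3) \<Rightarrow> real^3 \<Rightarrow> real^3
    \<Rightarrow> pfun \<Rightarrow> pfun \<Rightarrow> (nat \<Rightarrow> real^3) \<Rightarrow> (nat \<Rightarrow> real^3) \<Rightarrow> real" where
  "bform N q p Pp Pm Qp Qm \<alpha> \<beta> v w V W =
     (\<Sum>i\<in>edges N. integral {0..len N i}
        (\<lambda>s. - (ev (p i) s \<bullet> (ev (dv (v i)) s + cross3 (tang N i) (ev (w i) s)))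
             - ev (q i) s \<bullet> ev (dv (w i)) s))
   + (\<Sum>i\<in>edges N. Pp i \<bullet> ev (v i) (len N i) - Pm i \<bullet> ev (v i) 0)
   + (\<Sum>i\<in>edges N. Qp i \<bullet> ev (w i) (len N i) - Qm i \<bullet> ev (w i) 0)
   - (\<Sum>j\<in>verts N. (Aplus N Pp j - Aminus N Pm j) \<bullet> V j)
   - (\<Sum>j\<in>verts N. (Aplus N Qp j - Aminus N Qm j) \<bullet> W j)
   + \<alpha> \<bullet> netint N v + \<beta> \<bullet> netint N w"

end

theory Submission
  imports Defs
begin

(* Since k >= n - 1, q = w' is an admissible test, and it gives -int_N |w'|^2 = 0: w is constant
   on every edge. Point loads Q+, Q- on a single edge identify the end values of w with W at
   the endpoints, so by connectivity w is one constant c, and the test beta = int_N w gives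
   (total length) |c|^2 = 0. Once w = 0 the cross-product term drops out and the terms in
   (p, P+, P-, alpha; v, V) have the same form as those in (q, Q+, Q-, beta; w, W), so the
   same argument shows v = 0 and V = 0. *)

lemma poly_eq_0_if_zero_on_infinite:
  fixes p :: "'a::idom poly"
  assumes "infinite S" "\<And>x. x \<in> S \<Longrightarrow> poly p x = 0"
  shows "p = 0"
proof (rule ccontr)
  assume "p \<noteq> 0"
  then have "finite {x. poly p x = 0}" by (rule poly_roots_finite)
  moreover have "S \<subseteq> {x. poly p x = 0}" using assms(2) by auto
  ultimately show False using assms(1) finite_subset by blast
qed

lemma continuous_on_ev [continuous_intros]: "continuous_on S (ev p)"
  unfolding ev_def by (intro continuous_on_vec_lambda continuous_intros)

lemma ev_0 [simp]: "ev (\<lambda>j. 0) s = 0"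
  by (simp add: ev_def vec_eq_iff)

lemma ev_eq_0_if_integral_inner_self_eq_0:
  assumes "l > 0" "integral {0..l} (\<lambda>s. ev p s \<bullet> ev p s) = 0"
  shows "p = (\<lambda>j. 0)"
proof
  fix j
  have cont: "continuous_on {0..l} (\<lambda>s. ev p s \<bullet> ev p s)"
    by (intro continuous_intros)
  then have "((\<lambda>s. ev p s \<bullet> ev p s) has_integral 0) (cbox 0 l)"
    using integrable_integral[OF integrable_continuous_real[OF cont]] assms(2) by simp
  then have "ev p s \<bullet> ev p s = 0" if "s \<in> {0..l}" for s
    using has_integral_0_cbox_imp_0[of 0 l "\<lambda>s. ev p s \<bullet> ev p s" s] cont assms(1) that by auto
  then have "poly (p j) s = 0" if "s \<in> {0..l}" for s
    using that by (simp add: ev_def vec_eq_iff)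
  then show "p j = 0"
    using poly_eq_0_if_zero_on_infinite infinite_Icc[OF assms(1)] by blast
qed

lemma ev_const_if_dv_eq_0:
  assumes "dv p = (\<lambda>j. 0)"
  shows "ev p s = ev p 0"
proof -
  have "poly (p j) s = poly (p j) 0" for j
  proof -
    have "pderiv (p j) = 0" using fun_cong[OF assms, of j] by (simp add: dv_def)
    then obtain c where "p j = [:c:]" using pderiv_iszero by blast
    then show ?thesis by simp
  qed
  then show ?thesis by (simp add: ev_def vec_eq_iff)
qed

lemma inP_dv:
  assumes "inP N n u" "n \<le> k + 1"
  shows "inP N k (\<lambda>i. dv (u i))"
  unfolding inP_def dv_def
proof (intro ballI allI)
  fix i j
  assume "i \<in> edges N"
  then have "degree (u i j) \<le> n" using assms(1) by (simp add: inP_def)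
  then show "degree (pderiv (u i j)) \<le> k" using assms(2) degree_pderiv[of "u i j"] by linarith
qed

lemma finite_edges [simp]: "finite (edges N)"
  by (simp add: edges_def)

lemma finite_verts [simp]: "finite (verts N)"
  by (simp add: verts_def)

lemma straight_networkD:
  assumes "straight_network N" "i \<in> edges N"
  shows "src N i \<in> verts N" "tgt N i \<in> verts N" "len N i > 0"
  using assms by (simp_all add: straight_network_def)

lemma connected_network_const:
  assumes "connected_network N" "\<forall>i\<in>edges N. U (src N i) = U (tgt N i)"
    and "a \<in> verts N" "b \<in> verts N"
  shows "U a = U b"
proof -
  have "(a, b) \<in> (adj N)\<^sup>*"
    using assms(1,3,4) by (simp add: connected_network_def)
  then show ?thesis
  proof (induction rule: rtrancl_induct)
    case (step b c)
    then show ?case using assms(2) by (auto simp: adj_def)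
  qed simp
qed

lemma netint_const:
  assumes "\<forall>i\<in>edges N. len N i \<ge> 0 \<and> (\<forall>s. ev (u i) s = c)"
  shows "netint N u = (\<Sum>i\<in>edges N. len N i) *\<^sub>R c"
proof -
  have "integral {0..len N i} (ev (u i)) = len N i *\<^sub>R c" if "i \<in> edges N" for i
  proof -
    have "ev (u i) = (\<lambda>s. c)" using assms that by blast
    then show ?thesis using assms that by simp
  qed
  then show ?thesis by (simp add: netint_def scaleR_sum_left)
qed

lemma total_length_pos:
  assumes "straight_network N"
  shows "(\<Sum>i\<in>edges N. len N i) > 0"
proof (rule sum_pos)
  show "finite (edges N)" by simp
  show "edges N \<noteq> {}" using assms by (auto simp: edges_def straight_network_def)
qed (use assms straight_networkD in auto)

lemma edgewise_const_field_eq_0: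
  assumes N: "straight_network N"
    and const: "\<forall>i\<in>edges N. dv (u i) = (\<lambda>j. 0)"
    and ends: "\<forall>i\<in>edges N. ev (u i) (len N i) = U (tgt N i) \<and> ev (u i) 0 = U (src N i)"
    and mean: "netint N u = 0"
  shows "(\<forall>i\<in>edges N. u i = (\<lambda>j. 0)) \<and> (\<forall>j\<in>verts N. U j = 0)"
proof -
  have 1: "1 \<in> edges N" using N by (simp add: straight_network_def edges_def)
  define c where "c = U (src N 1)"
  have ev_u: "ev (u i) s = ev (u i) 0" if "i \<in> edges N" for i s
    by (rule ev_const_if_dv_eq_0) (use const that in blast)
  have "U (src N i) = U (tgt N i)" if "i \<in> edges N" for i
    using ends ev_u[of i "len N i"] that by simp
  then have U: "U j = c" if "j \<in> verts N" for j
    using connected_network_const[of N U j] N that straight_networkD(1)[OF N 1]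
    unfolding c_def straight_network_def by blast
  have u: "ev (u i) s = c" if "i \<in> edges N" for i s
  proof -
    have "ev (u i) s = ev (u i) 0" using ev_u that .
    also have "\<dots> = c" using ends U straight_networkD[OF N that] that by simp
    finally show ?thesis .
  qed
  have "netint N u = (\<Sum>i\<in>edges N. len N i) *\<^sub>R c"
    using u straight_networkD(3)[OF N] by (intro netint_const) (simp add: less_imp_le)
  then have "(\<Sum>i\<in>edges N. len N i) *\<^sub>R c = 0" using mean by simp
  then have "c = 0" using total_length_pos[OF N] by simp
  moreover have "u i = (\<lambda>j. 0)" if "i \<in> edges N" for i
  proof
    fix j
    have "poly (u i j) s = 0" for s
      using u[OF that, of s] \<open>c = 0\<close> by (simp add: ev_def vec_eq_iff)
    then show "u i j = 0"
      using poly_eq_0_if_zero_on_infinite infinite_UNIV_char_0 by blast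
  qed
  ultimately show ?thesis using U by simp
qed

text \<open>The terms of \<open>b\<close> pairing \<open>(q, Q\<^sub>+, Q\<^sub>-, \<beta>)\<close> with \<open>(w, W)\<close>; once \<open>w = 0\<close> the terms
  pairing \<open>(p, P\<^sub>+, P\<^sub>-, \<alpha>)\<close> with \<open>(v, V)\<close> have the same form.\<close>

definition bform_block :: "network \<Rightarrow> pfun \<Rightarrow> (nat \<Rightarrow> real^3) \<Rightarrow> (nat \<Rightarrow> real^3) \<Rightarrow> real^3
    \<Rightarrow> pfun \<Rightarrow> (nat \<Rightarrow> real^3) \<Rightarrow> real" where
  "bform_block N q Qp Qm \<beta> w W =
     - (\<Sum>i\<in>edges N. integral {0..len N i} (\<lambda>s. ev (q i) s \<bullet> ev (dv (w i)) s))
   + (\<Sum>i\<in>edges N. Qp i \<bullet> ev (w i) (len N i) - Qm i \<bullet> ev (w i) 0)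
   - (\<Sum>j\<in>verts N. (Aplus N Qp j - Aminus N Qm j) \<bullet> W j)
   + \<beta> \<bullet> netint N w"

lemma bform_eq_bform_block_w:
  "bform N q (\<lambda>i j. 0) (\<lambda>i. 0) (\<lambda>i. 0) Qp Qm 0 \<beta> v w V W = bform_block N q Qp Qm \<beta> w W"
  by (simp add: bform_def bform_block_def Aplus_def Aminus_def integral_neg sum_negf)

lemma bform_eq_bform_block_v:
  assumes "\<forall>i\<in>edges N. w i = (\<lambda>j. 0)"
  shows "bform N (\<lambda>i j. 0) p Pp Pm (\<lambda>i. 0) (\<lambda>i. 0) \<alpha> 0 v w V W = bform_block N p Pp Pm \<alpha> v V"
  using assms by (simp add: bform_def bform_block_def Aplus_def Aminus_def integral_neg sum_negf)

lemma Aplus_point: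
  assumes "i \<in> edges N"
  shows "Aplus N (\<lambda>i'. if i' = i then x else 0) j = (if j = tgt N i then x else 0)"
  using assms by (auto simp: Aplus_def sum.delta)

lemma Aminus_point:
  assumes "i \<in> edges N"
  shows "Aminus N (\<lambda>i'. if i' = i then x else 0) j = (if j = src N i then x else 0)"
  using assms by (auto simp: Aminus_def sum.delta)

lemma sum_inner_point:
  fixes x :: "'a::real_inner"
  assumes "finite A" "a \<in> A"
  shows "(\<Sum>b\<in>A. (if b = a then x else 0) \<bullet> f b) = x \<bullet> f a"
proof -
  have "(\<Sum>b\<in>A. (if b = a then x else 0) \<bullet> f b) = (\<Sum>b\<in>A. if b = a then x \<bullet> f b else 0)"
    by (rule sum.cong) auto
  then show ?thesis using assms by simp
qed

lemma bform_block_interior_test: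
  "bform_block N q (\<lambda>i. 0) (\<lambda>i. 0) 0 w W =
     - (\<Sum>i\<in>edges N. integral {0..len N i} (\<lambda>s. ev (q i) s \<bullet> ev (dv (w i)) s))"
  by (simp add: bform_block_def Aplus_def Aminus_def)

lemma bform_block_end_test:
  assumes "i \<in> edges N" "tgt N i \<in> verts N"
  shows "bform_block N (\<lambda>i j. 0) (\<lambda>i'. if i' = i then x else 0) (\<lambda>i. 0) 0 w W =
     x \<bullet> (ev (w i) (len N i) - W (tgt N i))"
  using assms by (simp add: bform_block_def Aplus_point Aminus_def sum_inner_point inner_diff_right)

lemma bform_block_start_test:
  assumes "i \<in> edges N" "src N i \<in> verts N"
  shows "bform_block N (\<lambda>i j. 0) (\<lambda>i. 0) (\<lambda>i'. if i' = i then x else 0) 0 w W =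
     x \<bullet> (W (src N i) - ev (w i) 0)"
  using assms by (simp add: bform_block_def Aplus_def Aminus_point sum_inner_point
      inner_diff_right sum_negf)

lemma bform_block_mean_test:
  "bform_block N (\<lambda>i j. 0) (\<lambda>i. 0) (\<lambda>i. 0) \<beta> w W = \<beta> \<bullet> netint N w"
  by (simp add: bform_block_def Aplus_def Aminus_def)

lemma bform_block_nondegenerate:
  assumes N: "straight_network N" and "n \<le> k + 1" "inP N n w"
    and tests: "\<forall>q Qp Qm \<beta>. inP N k q \<longrightarrow> bform_block N q Qp Qm \<beta> w W = 0"
  shows "(\<forall>i\<in>edges N. w i = (\<lambda>j. 0)) \<and> (\<forall>j\<in>verts N. W j = 0)"
proof (rule edgewise_const_field_eq_0[OF N])
  have tests_0: "bform_block N (\<lambda>i j. 0) Qp Qm \<beta> w W = 0" for Qp Qm \<beta>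
    using tests by (simp add: inP_def)
  let ?I = "\<lambda>i. integral {0..len N i} (\<lambda>s. ev (dv (w i)) s \<bullet> ev (dv (w i)) s)"
  have "(\<Sum>i\<in>edges N. ?I i) = 0"
    using tests inP_dv[OF assms(3,2)] bform_block_interior_test[of N "\<lambda>i. dv (w i)" w W]
    by simp
  moreover have "?I i \<ge> 0" for i
    by (intro integral_nonneg integrable_continuous_real continuous_intros) simp
  ultimately have "?I i = 0" if "i \<in> edges N" for i
    using that sum_nonneg_eq_0_iff[of "edges N" ?I] by simp
  then show "\<forall>i\<in>edges N. dv (w i) = (\<lambda>j. 0)"
    using ev_eq_0_if_integral_inner_self_eq_0 straight_networkD(3)[OF N] by blast
  show "\<forall>i\<in>edges N. ev (w i) (len N i) = W (tgt N i) \<and> ev (w i) 0 = W (src N i)"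
  proof (intro ballI conjI)
    fix i
    assume i: "i \<in> edges N"
    show "ev (w i) (len N i) = W (tgt N i)"
      using tests_0 bform_block_end_test[OF i straight_networkD(2)[OF N i],
          of "ev (w i) (len N i) - W (tgt N i)" w W]
      by simp
    show "ev (w i) 0 = W (src N i)"
      using tests_0 bform_block_start_test[OF i straight_networkD(1)[OF N i],
          of "W (src N i) - ev (w i) 0" w W]
      by simp
  qed
  show "netint N w = 0"
    using tests_0 bform_block_mean_test[of N "netint N w" w W] by simp
qed

theorem lemma4p2:
  fixes N :: network and n k :: nat and v w :: pfun and V W :: "nat \<Rightarrow> real^3"
  assumes "straight_network N"
    and "n \<ge> 1" and "k + 1 \<ge> n"
    and "inP N n v" and "inP N n w"
    and "\<forall>q p Pp Pm Qp Qm \<alpha> \<beta>. inP N k q \<longrightarrow> inP N k p \<longrightarrow>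
           bform N q p Pp Pm Qp Qm \<alpha> \<beta> v w V W = 0"
  shows "(\<forall>i\<in>edges N. v i = (\<lambda>j. 0) \<and> w i = (\<lambda>j. 0)) \<and>
         (\<forall>j\<in>verts N. V j = 0 \<and> W j = 0)"
proof -
  have zero: "inP N k (\<lambda>i j. 0)" by (simp add: inP_def)
  have "\<forall>q Qp Qm \<beta>. inP N k q \<longrightarrow> bform_block N q Qp Qm \<beta> w W = 0"
    using assms(6) zero by (simp flip: bform_eq_bform_block_w[where v = v and V = V])
  then have w: "(\<forall>i\<in>edges N. w i = (\<lambda>j. 0)) \<and> (\<forall>j\<in>verts N. W j = 0)"
    by (rule bform_block_nondegenerate[OF assms(1,3,5)])
  have "\<forall>p Pp Pm \<alpha>. inP N k p \<longrightarrow> bform_block N p Pp Pm \<alpha> v V = 0"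
    using assms(6) zero by (simp flip: bform_eq_bform_block_v[OF conjunct1[OF w], where W = W])
  then have v: "(\<forall>i\<in>edges N. v i = (\<lambda>j. 0)) \<and> (\<forall>j\<in>verts N. V j = 0)"
    by (rule bform_block_nondegenerate[OF assms(1,3,4)])
  show ?thesis using v w by blast
qed

end
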